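(* Suppose there exist real numbers $0<\alpha<\frac{1}{2}$ and $\delta>0$ such that $$\sum_{1\le j\le m^{\alpha}}\left\{\pi\!\left(\frac{m+m^{\alpha}}{j}\right)-\pi\!\left(\frac{m}{j}\right)\right\}\ge \delta m^{\alpha}$$ holds for all sufficiently large $m$ (the sum over positive integers $j$). Then, with $$\gamma=\max\!\left(\alpha,\ \frac{1-\delta(1-\alpha)}{2-\delta}\right),$$ we have $\gamma<\frac{1}{2}$ and $g_1(n)<n^{\gamma}$ for all sufficiently large integers $n$.
   Context: $\pi(x)$ is the number of primes $\le x$. For an integer $\nu>1$, $\omega(\nu)$ is the number of distinct prime divisors of $\nu$, and $\omega(1)=0$. $g_1(n)$ is the largest positive integer $k$ such that $\omega\big(\prod_{i=1}^{l}(n+i)\big)\ge l$ for all $1\le l\le k$. *)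

theory Defs
  imports "HOL-Analysis.Analysis" "HOL-Computational_Algebra.Primes"
begin

definition prime_pi :: "real \<Rightarrow> nat" where
  "prime_pi x = card {p :: nat. prime p \<and> real p \<le> x}"

definition omega :: "nat \<Rightarrow> nat" where
  "omega v = card (prime_factors v)"

definition g1 :: "nat \<Rightarrow> nat" where
  "g1 n = (GREATEST k. k \<ge> 1 \<and> (\<forall>l\<in>{1..k}. omega (\<Prod>i=1..l. n + i) \<ge> l))"

end

theory Submission
  imports Defs "HOL-Real_Asymp.Real_Asymp"
begin

text \<open>
  Suppose \<open>g\<^sub>1(n) \<ge> n\<^sup>\<gamma>\<close> and put \<open>l = \<lceil>n\<^sup>\<gamma>\<rceil>\<close>, so that \<open>P = (n+1)\<cdots>(n+l)\<close> has at least \<open>l\<close>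
  distinct prime factors. By hypothesis every window \<open>(m, m + m\<^sup>a]\<close> contains a multiple \<open>j p\<close>,
  \<open>j \<le> m\<^sup>a\<close>, of at least \<open>\<delta> m\<^sup>a\<close> primes \<open>p > m\<^sup>1\<^sup>-\<^sup>a\<close>; covering \<open>(n, n + l]\<close> by a chain of such
  windows yields about \<open>\<delta> l\<close> prime factors of \<open>P\<close> above \<open>n\<^sup>1\<^sup>-\<^sup>a\<close>. At most \<open>\<pi>(l)\<close> prime factors
  of \<open>P\<close> are \<open>\<le> l\<close>, and those above \<open>l\<close> divide \<open>(n+l choose l) \<le> (e (n+l) / l)\<^sup>l\<close>, so their
  logarithms sum to at most \<open>l (ln (n+l) - ln l + 1)\<close>. Weighing the factors from the windows by
  \<open>(1 - a) ln n\<close> and the others by \<open>ln l\<close> (all but \<open>\<pi>(K l)\<close> of them even by \<open>ln (K l)\<close>), Chebyshev's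
  bound for \<open>\<pi>\<close> gives \<open>(2 - \<delta>) ln l - (1 - \<delta> (1 - a)) ln n + (1 - \<delta>) ln K \<le> 16\<close>, which is
  absurd for the given \<open>\<gamma>\<close> once \<open>K\<close> is large.
  For \<open>\<delta> \<ge> 1\<close> the hypothesis is impossible, since a window holds at most \<open>\<lfloor>m\<^sup>a\<rfloor>\<close> such primes.
\<close>

section \<open>Chebyshev's bound for the prime counting function\<close>

lemma prod_primes_dvd:
  fixes S :: "nat set"
  assumes "finite S" and "\<And>p. p \<in> S \<Longrightarrow> prime p \<and> p dvd x"
  shows "\<Prod>S dvd x"
  using assms
proof (induction S rule: finite_induct)
  case empty
  then show ?case by simp
next
  case (insert p S)
  have "\<not> p dvd \<Prod>S"
  proof
    assume "p dvd \<Prod>S"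
    then obtain q where "q \<in> S" "p dvd q"
      using insert by (auto simp: prime_dvd_prod_iff)
    then show False
      using insert by (metis insert_iff primes_dvd_imp_eq)
  qed
  then have "coprime p (\<Prod>S)"
    using insert by (simp add: prime_imp_coprime)
  then show ?case
    using insert by (simp add: divides_mult)
qed

definition primorial :: "nat \<Rightarrow> nat" where
  "primorial n = \<Prod>{p. prime p \<and> p \<le> n}"

lemma binomial_odd_middle_le: "(2*m+1 choose m) \<le> 4^m"
proof -
  have "(2*m+1 choose m) + (2*m+1 choose (m+1)) = (\<Sum>k\<in>{m,m+1}. 2*m+1 choose k)"
    by simp
  also have "\<dots> \<le> (\<Sum>k\<le>2*m+1. 2*m+1 choose k)"
    by (rule sum_mono2) auto
  also have "\<dots> = 2^(2*m+1)"
    by (rule choose_row_sum)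
  finally have "2 * (2*m+1 choose m) \<le> 2 * 4^m"
    using binomial_symmetric[of m "2*m+1"] by (simp add: power_mult)
  then show ?thesis
    by simp
qed

lemma prod_middle_primes_le_binomial:
  "\<Prod>{p. prime p \<and> m+1 < p \<and> p \<le> 2*m+1} \<le> (2*m+1 choose m)"
proof (rule dvd_imp_le[OF prod_primes_dvd])
  show "finite {p. prime p \<and> m+1 < p \<and> p \<le> 2*m+1}"
    by (rule finite_subset[of _ "{..2*m+1}"]) auto
  fix p assume p: "p \<in> {p. prime p \<and> m+1 < p \<and> p \<le> 2*m+1}"
  then have "prime p" by simp
  have "p dvd fact m * fact (m+1) * (2*m+1 choose m)"
    using p binomial_fact_lemma[of m "2*m+1"] prime_dvd_fact_iff[of p "2*m+1"]
    by (simp add: mult_2)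
  moreover have "\<not> p dvd fact m * fact (m+1)"
    using p by (auto simp only: prime_dvd_mult_iff prime_dvd_fact_iff mem_Collect_eq)
  ultimately show "prime p \<and> p dvd (2*m+1 choose m)"
    using \<open>prime p\<close> by (auto simp: prime_dvd_mult_iff)
qed simp

lemma primorial_le_four_power: "primorial n \<le> 4^n"
proof (induction n rule: less_induct)
  case (less n)
  consider "n \<le> 2" | "n > 2" "even n" | m where "n = 2*m+1" "m \<ge> 1"
    by (cases "n \<le> 2"; cases "even n") (auto elim!: oddE)
  then show ?case
  proof cases
    case 1
    have "primorial n dvd fact n"
      unfolding primorial_def fact_prod
      by (auto intro!: prod_dvd_prod_subset dest: prime_gt_0_nat)
    then have "primorial n \<le> n^n"
      using fact_le_power[of n] by (metis dvd_imp_le fact_gt_zero le_trans of_nat_id)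
    also have "\<dots> \<le> 4^n"
      using 1 by (intro power_mono) auto
    finally show ?thesis .
  next
    case 2
    then have "\<not> prime n"
      using prime_odd_nat[of n] by auto
    then have "{p. prime p \<and> p \<le> n} = {p. prime p \<and> p \<le> n - 1}"
      using 2 by (auto simp: le_diff_conv2 order.order_iff_strict)
    then have "primorial n = primorial (n - 1)"
      by (simp add: primorial_def)
    also have "\<dots> \<le> 4^(n - 1)"
      using less 2 by simp
    also have "\<dots> \<le> 4^n"
      by (rule power_increasing) auto
    finally show ?thesis .
  next
    case 3
    let ?A = "{p. prime p \<and> p \<le> m+1}" and ?B = "{p. prime p \<and> m+1 < p \<and> p \<le> 2*m+1}"
    have "finite ?A" "finite ?B"
      by (auto intro: finite_subset[of _ "{..2*m+1}"])
    moreover have "{p. prime p \<and> p \<le> n} = ?A \<union> ?B"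
      using 3 by auto
    ultimately have "primorial n = \<Prod>?A * \<Prod>?B"
      unfolding primorial_def by (simp add: prod.union_disjoint disjoint_iff)
    also have "\<dots> \<le> 4^(m+1) * 4^m"
      using less[of "m+1"] 3 prod_middle_primes_le_binomial[of m] binomial_odd_middle_le[of m]
      by (intro mult_mono) (auto simp: primorial_def)
    also have "\<dots> = 4^n"
      using 3 by (simp flip: power_add)
    finally show ?thesis .
  qed
qed

lemma card_primes_above_sqrt_mult_ln_le:
  assumes "N \<ge> 2"
  shows "real (card {p::nat. prime p \<and> p \<le> N \<and> sqrt N < p}) * ln N \<le> 4 * real N"
proof -
  define S where "S = {p::nat. prime p \<and> p \<le> N \<and> sqrt N < p}"
  have "finite S"
    unfolding S_def by (rule finite_subset[of _ "{..N}"]) auto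
  have "sqrt N ^ card S = (\<Prod>p\<in>S. sqrt N)"
    by simp
  also have "\<dots> \<le> (\<Prod>p\<in>S. real p)"
    by (intro prod_mono) (auto simp: S_def)
  also have "\<dots> \<le> real (primorial N)"
    unfolding primorial_def of_nat_le_iff of_nat_prod[symmetric]
    by (intro dvd_imp_le prod_dvd_prod_subset) (auto simp: S_def prime_gt_0_nat)
  also have "\<dots> \<le> 4^N"
    using primorial_le_four_power[of N] by (metis of_nat_le_iff of_nat_numeral of_nat_power)
  finally have "ln (sqrt N ^ card S) \<le> ln (4^N)"
    using assms by (subst ln_le_cancel_iff) auto
  then have "real (card S) * ln N \<le> 2 * ln 4 * real N"
    using assms by (simp add: ln_realpow ln_sqrt mult_ac)
  also have "ln (4::real) = 2 * ln 2"
    using ln_mult[of 2 2] by simp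
  also have "2 * (2 * ln 2) * real N \<le> 4 * real N"
    using ln_2_less_1 by (intro mult_right_mono) auto
  finally show ?thesis
    unfolding S_def .
qed

lemma card_primes_le_chebyshev:
  assumes "N \<ge> 2"
  shows "real (card {p. prime p \<and> p \<le> N}) \<le> 6 * real N / ln N"
proof -
  let ?S1 = "{p. prime p \<and> p \<le> N \<and> real p \<le> sqrt N}"
  let ?S2 = "{p. prime p \<and> p \<le> N \<and> sqrt N < real p}"
  have lnN: "0 < ln (real N)"
    using assms by simp
  have "finite ?S1" "finite ?S2"
    by (auto intro: finite_subset[of _ "{..N}"])
  moreover have "{p. prime p \<and> p \<le> N} = ?S1 \<union> ?S2"
    by auto
  ultimately have card_split: "card {p. prime p \<and> p \<le> N} = card ?S1 + card ?S2"
    by (simp add: card_Un_disjoint disjoint_iff)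
  have "?S1 \<subseteq> {1..nat \<lfloor>sqrt N\<rfloor>}"
    by (auto simp: le_nat_floor prime_gt_0_nat Suc_le_eq)
  then have "card ?S1 \<le> nat \<lfloor>sqrt N\<rfloor>"
    using card_mono[of "{1..nat \<lfloor>sqrt N\<rfloor>}" ?S1] by simp
  then have "real (card ?S1) \<le> sqrt N"
    using of_nat_floor[of "sqrt N"] by (meson of_nat_le_iff order_trans real_sqrt_ge_zero of_nat_0_le_iff)
  then have "real (card ?S1) * ln N \<le> sqrt N * ln N"
    using lnN by (intro mult_right_mono) auto
  also have "\<dots> \<le> sqrt N * (2 * sqrt N)"
    using ln_le_minus_one[of "sqrt N"] assms by (intro mult_left_mono) (auto simp: ln_sqrt)
  also have "\<dots> = 2 * real N"
    by simp
  finally have "real (card ?S1) * ln N \<le> 2 * real N" .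
  moreover have "real (card {p. prime p \<and> p \<le> N}) * ln N = real (card ?S1) * ln N + real (card ?S2) * ln N"
    unfolding card_split by (simp add: distrib_right)
  ultimately have "real (card {p. prime p \<and> p \<le> N}) * ln N \<le> 6 * real N"
    using card_primes_above_sqrt_mult_ln_le[OF assms] by linarith
  then show ?thesis
    using lnN by (simp add: field_simps)
qed

lemma card_primes_mult_ln_le:
  assumes "2 \<le> N" "0 \<le> h" "h \<le> ln N"
  shows "real (card {p. prime p \<and> p \<le> N}) * (ln N + h) \<le> 12 * real N"
proof -
  have "real (card {p. prime p \<and> p \<le> N}) * (ln N + h) \<le> (6 * real N / ln N) * (2 * ln N)"
    using card_primes_le_chebyshev[OF assms(1)] assms(2,3) by (intro mult_mono) auto
  then show ?thesis
    using assms(1) by simp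
qed

lemma card_primes_scaled_mult_ln_le:
  fixes K N :: nat
  assumes "1 \<le> K" "2 \<le> N" "6 * K * ln K \<le> ln N"
  shows "real (card {p. prime p \<and> p \<le> K * N}) * ln K \<le> real N"
proof -
  have "0 < ln N" "0 \<le> ln K"
    using assms(1,2) by auto
  have "ln N \<le> ln (real (K * N))"
    using assms(1,2) by (intro ln_mono) auto
  then have "6 * real (K * N) / ln (real (K * N)) \<le> 6 * real (K * N) / ln N"
    using \<open>0 < ln N\<close> by (intro divide_left_mono mult_pos_pos) auto
  moreover have "2 \<le> K * N"
    using assms(1,2) mult_le_mono[of 1 K 2 N] by simp
  ultimately have "real (card {p. prime p \<and> p \<le> K * N}) \<le> 6 * real (K * N) / ln N"
    using card_primes_le_chebyshev by fastforce
  then have "real (card {p. prime p \<and> p \<le> K * N}) * ln K \<le> (6 * real (K * N) / ln N) * ln K"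
    using \<open>0 \<le> ln K\<close> by (rule mult_right_mono)
  also have "\<dots> = real N * (6 * K * ln K) / ln N"
    by simp
  also have "\<dots> \<le> real N"
    using assms(3) \<open>0 < ln N\<close> by (simp add: divide_le_eq mult_left_mono)
  finally show ?thesis .
qed

section \<open>Prime factors of a product of consecutive integers\<close>

lemma power_div_fact_le_exp:
  fixes x :: real
  assumes "0 \<le> x"
  shows "x ^ n / fact n \<le> exp x"
proof -
  have "(\<Sum>k\<in>{n}. x ^ k / fact k) \<le> (\<Sum>k. x ^ k / fact k)"
    using assms summable_exp[of x] by (intro sum_le_suminf) (auto simp: divide_inverse mult.commute)
  then show ?thesis
    by (simp add: exp_def divide_inverse mult.commute scaleR_conv_of_real)
qed

lemma prod_shifted_eq_fact_binomial: "(\<Prod>i=1..l. n + i) = fact l * ((n + l) choose l)"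
proof -
  have "(\<Prod>i=1..l. n + i) * fact n = (fact (n + l) :: nat)"
    by (induction l) (simp_all add: prod.nat_ivl_Suc' algebra_simps)
  also have "\<dots> = fact l * ((n + l) choose l) * fact n"
    using binomial_fact_lemma[of l "n + l"] by (simp add: mult_ac)
  finally show ?thesis
    by simp
qed

lemma omega_prod_shifted_le:
  "omega (\<Prod>i=1..l. n + i) \<le> card {p. prime p \<and> p \<le> n + l}"
proof -
  have "prime_factors (\<Prod>i=1..l. n + i) \<subseteq> {p. prime p \<and> p \<le> n + l}"
  proof
    fix p assume "p \<in> prime_factors (\<Prod>i=1..l. n + i)"
    then have "prime p" "p dvd (\<Prod>i=1..l. n + i)"
      by auto
    then obtain i where "i \<in> {1..l}" "p dvd n + i"
      by (auto simp: prime_dvd_prod_iff)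
    then show "p \<in> {p. prime p \<and> p \<le> n + l}"
      using \<open>prime p\<close> dvd_imp_le[of p "n + i"] by auto
  qed
  then show ?thesis
    unfolding omega_def by (intro card_mono) auto
qed

lemma card_primes_le_half: "card {p::nat. prime p \<and> p \<le> N} \<le> (N + 1) div 2"
proof -
  define f where "f p = (p + 1) div 2" for p :: nat
  have rep: "p = 2 \<or> 2 * f p = p + 1 \<and> 2 \<le> f p" if "prime p" for p
  proof (cases "p = 2")
    case False
    then have "odd p"
      using that prime_ge_2_nat[OF that] by (intro prime_odd_nat) auto
    then obtain x where "p = 2 * x + 1"
      by (rule oddE)
    moreover have "x \<ge> 1"
      using calculation prime_ge_2_nat[OF that] False by simp
    ultimately show ?thesis
      by (simp add: f_def)
  qed simp
  have "f 2 = 1"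
    by (simp add: f_def)
  then have two: "p = 2" if "prime p" "f p = 1" for p
    using rep[OF that(1)] that(2) by auto
  have inj: "inj_on f {p. prime p \<and> p \<le> N}"
  proof (rule inj_onI)
    fix p q assume "p \<in> {p. prime p \<and> p \<le> N}" "q \<in> {p. prime p \<and> p \<le> N}" and eq: "f p = f q"
    then have "prime p" "prime q"
      by auto
    show "p = q"
    proof (cases "p = 2 \<or> q = 2")
      case True
      then show ?thesis
        using two[OF \<open>prime p\<close>] two[OF \<open>prime q\<close>] eq \<open>f 2 = 1\<close> by auto
    next
      case False
      then show ?thesis
        using rep[OF \<open>prime p\<close>] rep[OF \<open>prime q\<close>] eq by linarith
    qed
  qed
  have "f p \<in> {1..(N + 1) div 2}" if "prime p" "p \<le> N" for p
    using div_le_mono[of 2 "p + 1" 2] div_le_mono[of "p + 1" "N + 1" 2] prime_ge_2_nat[OF that(1)] that(2)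
    unfolding f_def by auto
  then have "f ` {p. prime p \<and> p \<le> N} \<subseteq> {1..(N + 1) div 2}"
    by blast
  from card_inj_on_le[OF inj this] show ?thesis
    by simp
qed

lemma g1_omega_ge:
  assumes "1 \<le> n" "1 \<le> l" "l \<le> g1 n"
  shows "l \<le> omega (\<Prod>i=1..l. n + i)"
proof -
  define P where "P k \<longleftrightarrow> k \<ge> 1 \<and> (\<forall>l\<in>{1..k}. omega (\<Prod>i=1..l. n + i) \<ge> l)" for k
  obtain p where "prime p" "p dvd n + 1"
    using prime_factor_nat[of "n + 1"] assms(1) by auto
  then have "p \<in> prime_factors (n + 1)"
    by (simp add: in_prime_factors_iff)
  then have "omega (n + 1) \<ge> 1"
    unfolding omega_def by (metis One_nat_def Suc_leI card_gt_0_iff empty_iff finite_set_mset)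
  then have "P 1"
    unfolding P_def by simp
  moreover have bound: "k \<le> n + 1" if "P k" for k
  proof -
    have "k \<le> omega (\<Prod>i=1..k. n + i)"
      using that unfolding P_def by auto
    also have "\<dots> \<le> card {p. prime p \<and> p \<le> n + k}"
      by (rule omega_prod_shifted_le)
    also have "\<dots> \<le> (n + k + 1) div 2"
      by (rule card_primes_le_half)
    finally show ?thesis
      by linarith
  qed
  moreover have "g1 n = Greatest P"
    unfolding g1_def P_def ..
  ultimately have "P (g1 n)"
    using GreatestI_nat[of P 1 "n + 1"] by metis
  then show ?thesis
    using assms(2,3) unfolding P_def by auto
qed

text \<open>The primes in \<open>Q\<close> divide \<open>(n+l choose l) \<le> (e (n+l) / l)\<^sup>l\<close>.\<close>
lemma sum_ln_large_prime_factors_le: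
  assumes "l \<ge> 1" and "n \<ge> 1" and "finite Q"
    and Q: "\<And>p. p \<in> Q \<Longrightarrow> prime p \<and> l < p \<and> p dvd (\<Prod>i=1..l. n + i)"
  shows "(\<Sum>p\<in>Q. ln (real p)) \<le> real l * (ln (real (n + l)) - ln (real l) + 1)"
proof -
  define C where "C = (n + l) choose l"
  have "C > 0"
    unfolding C_def by simp
  have "\<Prod>Q dvd C"
  proof (rule prod_primes_dvd[OF \<open>finite Q\<close>])
    fix p assume "p \<in> Q"
    moreover have "(\<Prod>i=1..l. n + i) = fact l * C"
      unfolding C_def by (rule prod_shifted_eq_fact_binomial)
    ultimately have "prime p" "l < p" "p dvd fact l * C"
      using Q[of p] by simp_all
    then show "prime p \<and> p dvd C"
      by (auto simp: prime_dvd_mult_iff prime_dvd_fact_iff)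
  qed
  then have "(\<Prod>p\<in>Q. real p) \<le> real C"
    using \<open>C > 0\<close> by (metis dvd_imp_le of_nat_le_iff of_nat_prod prod.cong)
  moreover have "real C * fact l \<le> real (n + l) ^ l"
    using binomial_fact_pow[of "n + l" l] unfolding C_def by (metis of_nat_fact of_nat_le_iff of_nat_mult of_nat_power)
  moreover have "real l ^ l \<le> exp (real l) * fact l"
    using power_div_fact_le_exp[of "real l" l] by (simp add: field_simps)
  ultimately have "(\<Prod>p\<in>Q. real p) * real l ^ l \<le> real C * (exp (real l) * fact l)"
    by (intro mult_mono) auto
  also have "\<dots> = real C * fact l * exp (real l)"
    by simp
  also have "\<dots> \<le> real (n + l) ^ l * exp (real l)"
    using \<open>real C * fact l \<le> real (n + l) ^ l\<close> by (intro mult_right_mono) auto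
  finally have "(\<Prod>p\<in>Q. real p) * real l ^ l \<le> real (n + l) ^ l * exp (real l)" .
  then have "(\<Prod>p\<in>Q. real p) \<le> real (n + l) ^ l * exp (real l) / real l ^ l"
    using assms(1) by (simp add: field_simps)
  moreover have "(\<Sum>p\<in>Q. ln (real p)) = ln (\<Prod>p\<in>Q. real p)"
    using Q \<open>finite Q\<close> by (simp add: ln_prod prime_gt_0_nat)
  moreover have "0 < (\<Prod>p\<in>Q. real p)"
    using Q by (intro prod_pos) (auto simp: prime_gt_0_nat)
  ultimately have "(\<Sum>p\<in>Q. ln (real p)) \<le> ln (real (n + l) ^ l * exp (real l) / real l ^ l)"
    by (simp only: ln_mono)
  also have "\<dots> = real l * (ln (real (n + l)) - ln (real l) + 1)"
    using assms by (simp add: ln_div ln_mult ln_realpow algebra_simps)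
  finally show ?thesis .
qed

lemma sum_ln_primes_above_ge:
  fixes l K :: nat
  assumes "finite B" and B: "\<And>p. p \<in> B \<Longrightarrow> prime p \<and> l < p" and "l \<ge> 1" and "K \<ge> 1"
  shows "real (card B) * ln (real l) + (real (card B) - real (card {p. prime p \<and> p \<le> K * l})) * ln (real K)
           \<le> (\<Sum>p\<in>B. ln (real p))"
proof -
  define B1 where "B1 = {p\<in>B. p \<le> K * l}"
  define B2 where "B2 = {p\<in>B. K * l < p}"
  have fin: "finite B1" "finite B2"
    using \<open>finite B\<close> by (simp_all add: B1_def B2_def)
  have "B = B1 \<union> B2" "B1 \<inter> B2 = {}"
    by (auto simp: B1_def B2_def)
  then have card_B: "card B = card B1 + card B2"
    and sum_B: "(\<Sum>p\<in>B. ln (real p)) = (\<Sum>p\<in>B1. ln (real p)) + (\<Sum>p\<in>B2. ln (real p))"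
    using fin by (simp_all add: card_Un_disjoint sum.union_disjoint)
  have "card B1 \<le> card {p. prime p \<and> p \<le> K * l}"
    by (rule card_mono) (auto simp: B1_def dest: B)
  then have "(real (card B) - real (card {p. prime p \<and> p \<le> K * l})) * ln (real K) \<le> real (card B2) * ln (real K)"
    using card_B \<open>K \<ge> 1\<close> by (intro mult_right_mono) auto
  moreover have "ln (real l) \<le> ln (real p)" if "p \<in> B1" for p
    using that B[of p] \<open>l \<ge> 1\<close> by (intro ln_mono) (auto simp: B1_def)
  then have "real (card B1) * ln (real l) \<le> (\<Sum>p\<in>B1. ln (real p))"
    by (intro sum_bounded_below)
  moreover have "ln (real (K * l)) \<le> ln (real p)" if "p \<in> B2" for p
    using that \<open>l \<ge> 1\<close> \<open>K \<ge> 1\<close> by (intro ln_mono) (auto simp: B2_def less_imp_le simp flip: of_nat_mult)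
  then have "real (card B2) * (ln (real l) + ln (real K)) \<le> (\<Sum>p\<in>B2. ln (real p))"
    using \<open>l \<ge> 1\<close> \<open>K \<ge> 1\<close> by (intro sum_bounded_below) (auto simp: ln_mult add.commute)
  moreover have "real (card B) * ln (real l) = real (card B1) * ln (real l) + real (card B2) * ln (real l)"
    using card_B by (simp add: distrib_right)
  moreover have "real (card B2) * (ln (real l) + ln (real K)) = real (card B2) * ln (real l) + real (card B2) * ln (real K)"
    by (simp add: distrib_left)
  ultimately show ?thesis
    using sum_B by linarith
qed

section \<open>Primes with a multiple in a short window\<close>

text \<open>\<open>window_primes a m\<close> consists of the primes having a multiple \<open>j p\<close>, \<open>j \<le> m\<^sup>a\<close>, in the
  window \<open>(m, m + m\<^sup>a]\<close>; its cardinality is the sum over \<open>j\<close> in the hypothesis of the theorem.\<close>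

definition window_primes_at :: "real \<Rightarrow> nat \<Rightarrow> nat \<Rightarrow> nat set" where
  "window_primes_at a m j =
     {p. prime p \<and> real m / real j < real p \<and> real p \<le> (real m + real m powr a) / real j}"

definition window_primes :: "real \<Rightarrow> nat \<Rightarrow> nat set" where
  "window_primes a m = (\<Union>j\<in>{1..nat \<lfloor>real m powr a\<rfloor>}. window_primes_at a m j)"

lemma le_nat_floor_imp_le: "0 \<le> x \<Longrightarrow> k \<le> nat \<lfloor>x\<rfloor> \<Longrightarrow> real k \<le> x"
  using of_nat_floor[of x] by (meson of_nat_le_iff order_trans)

lemma prime_pi_diff_eq_card:
  assumes "x \<le> y"
  shows "real (prime_pi y) - real (prime_pi x) = real (card {p. prime p \<and> x < real p \<and> real p \<le> y})"
proof -
  have fin: "finite {p :: nat. prime p \<and> real p \<le> z}" for z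
    by (rule finite_subset[of _ "{..nat \<lfloor>z\<rfloor>}"]) (auto intro: le_nat_floor)
  have "{p. prime p \<and> real p \<le> y} =
          {p. prime p \<and> real p \<le> x} \<union> {p. prime p \<and> x < real p \<and> real p \<le> y}"
    using assms by auto
  then have "card {p. prime p \<and> real p \<le> y} =
               card {p. prime p \<and> real p \<le> x} + card {p. prime p \<and> x < real p \<and> real p \<le> y}"
    by (simp add: card_Un_disjoint disjoint_iff fin finite_subset[OF _ fin[of y]])
  then show ?thesis
    unfolding prime_pi_def by simp
qed

lemma finite_window_primes_at: "finite (window_primes_at a m j)"
  by (rule finite_subset[of _ "{..nat \<lfloor>(real m + real m powr a) / real j\<rfloor>}"])
     (auto simp: window_primes_at_def intro: le_nat_floor)

lemma finite_window_primes: "finite (window_primes a m)"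
  unfolding window_primes_def by (auto intro: finite_window_primes_at)

lemma window_primes_atD:
  assumes "m \<ge> 1" "j \<in> {1..nat \<lfloor>real m powr a\<rfloor>}" "p \<in> window_primes_at a m j"
  shows "prime p" "real m powr (1 - a) < real p" "m < j * p" "real (j * p) \<le> real m + real m powr a"
proof -
  have "1 \<le> real j" "real j \<le> real m powr a"
    using assms(2) by (auto intro: le_nat_floor_imp_le)
  moreover have lo: "real m / real j < real p" and hi: "real p \<le> (real m + real m powr a) / real j"
    using assms(3) by (auto simp: window_primes_at_def)
  ultimately have "real m < real (j * p)" "real (j * p) \<le> real m + real m powr a"
    by (simp_all add: field_simps)
  then show "m < j * p" "real (j * p) \<le> real m + real m powr a"
    by (simp_all only: of_nat_less_iff)
  show "prime p"
    using assms(3) by (simp add: window_primes_at_def)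
  have "real m powr (1 - a) = real m / real m powr a"
    using assms(1) by (simp add: powr_diff)
  also have "\<dots> \<le> real m / real j"
    using \<open>1 \<le> real j\<close> \<open>real j \<le> real m powr a\<close> assms(1) by (intro divide_left_mono) auto
  finally show "real m powr (1 - a) < real p"
    using lo by linarith
qed

text \<open>A prime above \<open>m\<^sup>a\<close> has at most one multiple in a window of length \<open>m\<^sup>a\<close>.\<close>
lemma window_primes_at_disjoint:
  assumes "0 < a" "a < 1/2" "m \<ge> 1"
    and "i \<in> {1..nat \<lfloor>real m powr a\<rfloor>}" "j \<in> {1..nat \<lfloor>real m powr a\<rfloor>}" "i < j"
  shows "window_primes_at a m i \<inter> window_primes_at a m j = {}"
proof (rule ccontr)
  assume "window_primes_at a m i \<inter> window_primes_at a m j \<noteq> {}"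
  then obtain p where p: "p \<in> window_primes_at a m i" "p \<in> window_primes_at a m j"
    by blast
  have "real m powr a \<le> real m powr (1 - a)"
    using assms by (intro powr_mono) auto
  then have "real m powr a < real p"
    using window_primes_atD(2)[OF assms(3,4) p(1)] by linarith
  moreover have "(i + 1) * p \<le> j * p"
    using \<open>i < j\<close> by (intro mult_right_mono) auto
  then have "real (i * p) + real p \<le> real (j * p)"
    by (simp only: of_nat_le_iff flip: of_nat_add) (simp add: algebra_simps)
  moreover have "real m < real (i * p)"
    using window_primes_atD(3)[OF assms(3,4) p(1)] by (simp only: of_nat_less_iff)
  ultimately show False
    using window_primes_atD(4)[OF assms(3,5) p(2)] by linarith
qed

lemma card_window_primes_eq_sum:
  assumes "0 < a" "a < 1/2" "m \<ge> 1"
  shows "real (card (window_primes a m)) = (\<Sum>j = 1..nat \<lfloor>real m powr a\<rfloor>.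
           real (prime_pi ((real m + real m powr a) / real j)) - real (prime_pi (real m / real j)))"
proof -
  have "card (window_primes a m) = (\<Sum>j\<in>{1..nat \<lfloor>real m powr a\<rfloor>}. card (window_primes_at a m j))"
    unfolding window_primes_def
  proof (rule card_UN_disjoint)
    show "\<forall>i\<in>{1..nat \<lfloor>real m powr a\<rfloor>}. \<forall>j\<in>{1..nat \<lfloor>real m powr a\<rfloor>}.
            i \<noteq> j \<longrightarrow> window_primes_at a m i \<inter> window_primes_at a m j = {}"
    proof (intro ballI impI)
      fix i j assume "i \<in> {1..nat \<lfloor>real m powr a\<rfloor>}" "j \<in> {1..nat \<lfloor>real m powr a\<rfloor>}" "i \<noteq> j"
      then show "window_primes_at a m i \<inter> window_primes_at a m j = {}"
        using window_primes_at_disjoint[OF assms, of i j] window_primes_at_disjoint[OF assms, of j i]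
        by (cases "i < j") (auto simp: Int_commute)
    qed
  qed (auto simp: finite_window_primes_at)
  moreover have "real (card (window_primes_at a m j)) =
        real (prime_pi ((real m + real m powr a) / real j)) - real (prime_pi (real m / real j))" for j
  proof -
    have "real m / real j \<le> (real m + real m powr a) / real j"
      by (intro divide_right_mono) auto
    from prime_pi_diff_eq_card[OF this] show ?thesis
      unfolding window_primes_at_def by (rule sym)
  qed
  ultimately show ?thesis
    by simp
qed

lemma window_primesD:
  assumes "m \<ge> 1" "p \<in> window_primes a m"
  shows "prime p" "real m powr (1 - a) < real p"
    "\<exists>j. 1 \<le> j \<and> j \<le> nat \<lfloor>real m powr a\<rfloor> \<and> m < j * p \<and> j * p \<le> m + nat \<lfloor>real m powr a\<rfloor>"
proof -
  obtain j where j: "j \<in> {1..nat \<lfloor>real m powr a\<rfloor>}" and p: "p \<in> window_primes_at a m j"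
    using assms(2) unfolding window_primes_def by auto
  show "prime p" "real m powr (1 - a) < real p"
    using window_primes_atD[OF assms(1) j p] by auto
  have "int (j * p) - int m \<le> \<lfloor>real m powr a\<rfloor>"
    using window_primes_atD(4)[OF assms(1) j p] by (simp add: le_floor_iff)
  then have "j * p \<le> m + nat \<lfloor>real m powr a\<rfloor>"
    by linarith
  then show "\<exists>j. 1 \<le> j \<and> j \<le> nat \<lfloor>real m powr a\<rfloor> \<and> m < j * p \<and> j * p \<le> m + nat \<lfloor>real m powr a\<rfloor>"
    using j window_primes_atD(3)[OF assms(1) j p] by (intro exI[of _ j]) auto
qed

text \<open>Each prime of the window is sent to its unique multiple in the window.\<close>
lemma card_window_primes_le:
  assumes "0 < a" "a < 1/2" "m \<ge> 1"
  shows "card (window_primes a m) \<le> nat \<lfloor>real m powr a\<rfloor>"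
proof -
  define k where "k = nat \<lfloor>real m powr a\<rfloor>"
  have "real m powr a \<le> real m powr (1 - a)"
    using assms by (intro powr_mono) auto
  moreover have "real k \<le> real m powr a"
    unfolding k_def by (rule le_nat_floor_imp_le) auto
  ultimately have k_less: "k < p" if "p \<in> window_primes a m" for p
    using window_primesD(2)[OF assms(3) that] by (simp add: less_le_trans)
  define f where "f p = (m div p + 1) * p" for p
  have f: "f p = j * p" if "p \<in> window_primes a m" "m < j * p" "j * p \<le> m + k" for p j
  proof -
    have "m div p < j"
      using that(2) by (rule less_mult_imp_div_less)
    moreover have "(j - 1) * p \<le> m"
      using that(3) k_less[OF that(1)] by (simp add: diff_mult_distrib)
    then have "j - 1 \<le> m div p"
      using k_less[OF that(1)] by (simp add: less_eq_div_iff_mult_less_eq)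
    ultimately have "j = m div p + 1"
      by simp
    then show ?thesis
      by (simp add: f_def)
  qed
  have "inj_on f (window_primes a m)"
  proof (rule inj_onI)
    fix p q assume p: "p \<in> window_primes a m" and q: "q \<in> window_primes a m" and "f p = f q"
    obtain i where i: "m < i * p" "i * p \<le> m + k"
      using window_primesD(3)[OF assms(3) p] unfolding k_def by blast
    obtain j where j: "j \<le> k" "m < j * q" "j * q \<le> m + k"
      using window_primesD(3)[OF assms(3) q] unfolding k_def by blast
    have "i * p = j * q"
      using \<open>f p = f q\<close> f[OF p i] f[OF q j(2,3)] by simp
    show "p = q"
    proof (rule ccontr)
      assume "p \<noteq> q"
      have "prime p" "prime q"
        using window_primesD(1)[OF assms(3)] p q by auto
      moreover have "p dvd j * q"
        using \<open>i * p = j * q\<close> by (metis dvd_triv_right)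
      ultimately have "p dvd j"
        using \<open>p \<noteq> q\<close> by (auto simp: prime_dvd_mult_iff dest: primes_dvd_imp_eq)
      moreover have "j < p"
        using j(1) k_less[OF p] by simp
      moreover have "j > 0"
        using j(2) by (auto intro: gr0I)
      ultimately show False
        by (auto dest: dvd_imp_le)
    qed
  qed
  moreover have "f ` window_primes a m \<subseteq> {m+1..m+k}"
  proof (rule image_subsetI)
    fix p assume p: "p \<in> window_primes a m"
    then obtain j where "m < j * p" "j * p \<le> m + k"
      using window_primesD(3)[OF assms(3) p] unfolding k_def by blast
    then show "f p \<in> {m+1..m+k}"
      using f[OF p] by simp
  qed
  ultimately have "card (window_primes a m) \<le> card {m+1..m+k}"
    using card_inj_on_le by blast
  then show ?thesis
    by (simp add: k_def)
qed

lemma exists_powr_notin_Ints: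
  fixes a :: real
  assumes "0 < a" "a \<le> 1/2"
  shows "\<exists>m\<ge>M. real m powr a \<notin> \<int>"
proof (rule ccontr)
  assume "\<not> ?thesis"
  then have integral: "real m powr a \<in> \<int>" if "m \<ge> M" for m
    using that by blast
  define M' where "M' = max M 1"
  have step: "real (m + 1) powr a \<ge> real m powr a + 1" if "m \<ge> M'" for m
  proof -
    have "real m powr a \<in> \<int>" "real (m + 1) powr a \<in> \<int>"
      using integral[of m] integral[of "m + 1"] that by (simp_all add: M'_def)
    then obtain x y where "real m powr a = of_int x" "real (m + 1) powr a = of_int y"
      by (metis Ints_cases)
    moreover have "real m powr a < real (m + 1) powr a"
      using that assms by (intro powr_less_mono2) (auto simp: M'_def)
    ultimately show ?thesis
      by simp
  qed
  have grow: "real k \<le> real (M' + k) powr a" for k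
  proof (induction k)
    case (Suc k)
    then show ?case
      using step[of "M' + k"] by simp
  qed simp
  define k where "k = M' + 3"
  have "real k \<le> real (M' + k) powr a"
    by (rule grow)
  also have "\<dots> \<le> real (M' + k) powr (1/2)"
    using assms by (intro powr_mono) (auto simp: k_def)
  also have "\<dots> = sqrt (real (M' + k))"
    by (simp add: powr_half_sqrt)
  also have "\<dots> < real k"
    by (rule real_less_lsqrt) (auto simp: k_def power2_eq_square algebra_simps add_pos_nonneg)
  finally show False
    by simp
qed

section \<open>Chains of consecutive windows\<close>

primrec window_chain :: "real \<Rightarrow> nat \<Rightarrow> nat \<Rightarrow> nat" where
  "window_chain a n 0 = n"
| "window_chain a n (Suc t) = window_chain a n t + nat \<lfloor>real (window_chain a n t) powr a\<rfloor>"

lemma window_chain_ge: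
  assumes "0 \<le> a" "n \<ge> 1"
  shows "n + t \<le> window_chain a n t"
proof (induction t)
  case (Suc t)
  then have "1 \<le> real (window_chain a n t) powr a"
    using assms by (intro ge_one_powr_ge_zero) auto
  then show ?case
    using Suc le_nat_floor[of 1 "real (window_chain a n t) powr a"] by simp
qed simp

lemma incseq_window_chain: "incseq (window_chain a n)"
  by (rule incseq_SucI) simp

lemma exists_crossing:
  fixes f :: "nat \<Rightarrow> nat"
  assumes "f 0 \<le> N" "N < f k"
  shows "\<exists>t<k. f t \<le> N \<and> N < f (Suc t)"
  using assms(2)
proof (induction k)
  case 0
  then show ?case
    using assms(1) by simp
next
  case (Suc k)
  show ?case
  proof (cases "N < f k")
    case True
    then show ?thesis
      using Suc.IH less_SucI by blast
  next
    case False
    then show ?thesis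
      using Suc.prems by (intro exI[of _ k]) auto
  qed
qed

lemma window_chain_primes_large:
  assumes "0 < a" "a < 1/2" "n \<ge> 1" "p \<in> window_primes a (window_chain a n t)"
  shows "real n powr (1 - a) < real p"
proof -
  have "n \<le> window_chain a n t"
    using window_chain_ge[of a n t] assms by simp
  then have "real n powr (1 - a) \<le> real (window_chain a n t) powr (1 - a)"
    using assms by (intro powr_mono2) auto
  also have "\<dots> < real p"
    using window_primesD(2)[OF _ assms(4)] \<open>n \<le> window_chain a n t\<close> assms(3) by simp
  finally show ?thesis .
qed

lemma window_chain_primes_prime_factor:
  assumes "0 < a" "a < 1/2" "n \<ge> 1" "window_chain a n (Suc t) \<le> n + l"
    and "p \<in> window_primes a (window_chain a n t)"
  shows "p \<in> prime_factors (\<Prod>i=1..l. n + i)"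
proof -
  let ?s = "window_chain a n"
  have "n \<le> ?s t"
    using window_chain_ge[of a n t] assms by simp
  then obtain j where j: "?s t < j * p" "j * p \<le> ?s (Suc t)"
    using window_primesD(3)[OF _ assms(5)] assms(3) by auto
  then have "j * p - n \<in> {1..l}"
    using \<open>n \<le> ?s t\<close> assms(4) by auto
  then have "n + (j * p - n) dvd (\<Prod>i=1..l. n + i)"
    by (rule dvd_prodI[rotated]) simp
  moreover have "n + (j * p - n) = j * p"
    using j \<open>n \<le> ?s t\<close> by simp
  ultimately have "p dvd (\<Prod>i=1..l. n + i)"
    by (metis dvd_mult_right)
  moreover have "(\<Prod>i=1..l. n + i) \<noteq> 0"
    using assms(3) by simp
  ultimately show ?thesis
    using window_primesD(1)[OF _ assms(5)] \<open>n \<le> ?s t\<close> assms(3)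
    by (auto simp: in_prime_factors_iff)
qed

text \<open>A prime above \<open>l\<close> with multiples in two windows of the chain inside \<open>(n, n + l]\<close> would
  have two multiples at distance less than \<open>l\<close>.\<close>
lemma window_chain_primes_disjoint:
  assumes "0 < a" "a < 1/2" "n \<ge> 1" "t1 < t2" "window_chain a n (Suc t2) \<le> n + l" "l < p"
    and "p \<in> window_primes a (window_chain a n t1)"
  shows "p \<notin> window_primes a (window_chain a n t2)"
proof
  let ?s = "window_chain a n"
  assume "p \<in> window_primes a (?s t2)"
  have pos: "?s t \<ge> 1" for t
    using window_chain_ge[of a n t] assms by simp
  obtain i where i: "?s t1 < i * p" "i * p \<le> ?s (Suc t1)"
    using window_primesD(3)[OF pos assms(7)] by auto
  obtain j where j: "?s t2 < j * p" "j * p \<le> ?s (Suc t2)"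
    using window_primesD(3)[OF pos \<open>p \<in> window_primes a (?s t2)\<close>] by auto
  have "?s (Suc t1) \<le> ?s t2"
    using incseqD[OF incseq_window_chain, of "Suc t1" t2] assms(4) by simp
  then have "i * p < j * p"
    using i j by linarith
  then have "i < j"
    by simp
  then have "i * p + p \<le> j * p"
    using mult_right_mono[of "i + 1" j p] by simp
  moreover have "n \<le> ?s t1"
    using window_chain_ge[of a n t1] assms by simp
  ultimately show False
    using i j assms(5,6) by linarith
qed

lemma card_UN_window_chain_primes:
  assumes "0 < a" "a < 1/2" "n \<ge> 1" "window_chain a n T \<le> n + l" "real l < real n powr (1 - a)"
  shows "card (\<Union>t<T. window_primes a (window_chain a n t)) =
           (\<Sum>t<T. card (window_primes a (window_chain a n t)))"
proof (rule card_UN_disjoint)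
  let ?s = "window_chain a n"
  have disj: "window_primes a (?s i) \<inter> window_primes a (?s j) = {}" if "i < j" "j < T" for i j
  proof -
    have stop: "?s (Suc j) \<le> n + l"
      using incseqD[OF incseq_window_chain Suc_leI[OF \<open>j < T\<close>]] assms(4) by (rule order_trans)
    have "p \<notin> window_primes a (?s j)" if "p \<in> window_primes a (?s i)" for p
    proof (rule window_chain_primes_disjoint[OF assms(1-3) \<open>i < j\<close> stop _ that])
      show "l < p"
        using window_chain_primes_large[OF assms(1-3) that] assms(5) by linarith
    qed
    then show ?thesis
      by blast
  qed
  show "\<forall>i\<in>{..<T}. \<forall>j\<in>{..<T}. i \<noteq> j \<longrightarrow> window_primes a (?s i) \<inter> window_primes a (?s j) = {}"
  proof (intro ballI impI)
    fix i j assume "i \<in> {..<T}" "j \<in> {..<T}" "i \<noteq> j"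
    then show "window_primes a (?s i) \<inter> window_primes a (?s j) = {}"
      using disj[of i j] disj[of j i] by (cases "i < j") (simp_all add: Int_commute)
  qed
qed (auto simp: finite_window_primes)

lemma exponent_bounds:
  fixes a \<delta> :: real
  assumes "0 < a" "a < 1/2" "0 < \<delta>" "\<delta> < 1"
  shows "a < (1 - \<delta> * (1 - a)) / (2 - \<delta>)" "(1 - \<delta> * (1 - a)) / (2 - \<delta>) < 1/2"
proof -
  have "0 < (1 - \<delta>) * (1 - 2 * a)" "0 < \<delta> * (1 - 2 * a)"
    using assms by (auto intro: mult_pos_pos)
  then show "a < (1 - \<delta> * (1 - a)) / (2 - \<delta>)" "(1 - \<delta> * (1 - a)) / (2 - \<delta>) < 1/2"
    using assms by (simp_all add: field_simps)
qed

lemma add_powr_le_two_mult_powr: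
  fixes m n :: nat and a :: real
  assumes "0 \<le> a" "a \<le> 1" "m \<le> n"
  shows "real (n + m) powr a \<le> 2 * real n powr a"
proof -
  have "real (n + m) powr a \<le> (2 * real n) powr a"
    using assms by (intro powr_mono2) auto
  also have "\<dots> = 2 powr a * real n powr a"
    by (simp add: powr_mult)
  also have "\<dots> \<le> 2 * real n powr a"
    using assms powr_mono[of a 1 2] by (intro mult_right_mono) auto
  finally show ?thesis .
qed

text \<open>The final bookkeeping, with \<open>L = ln n\<close>, \<open>\<Lambda> = ln l\<close>, \<open>H = ln K\<close>, \<open>w = (n+l)\<^sup>a\<close>,
  \<open>\<pi>\<^sub>1 = \<pi>(l)\<close>, \<open>\<pi>\<^sub>2 = \<pi>(K l)\<close>; \<open>g\<close> counts the prime factors of \<open>(n+1)\<cdots>(n+l)\<close> found in windows and \<open>b\<close>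
  the remaining ones above \<open>l\<close>.\<close>
lemma log_budget_bound:
  fixes a \<delta> \<gamma> L \<Lambda> H l g b \<pi>\<^sub>1 \<pi>\<^sub>2 w :: real
  assumes "0 < \<delta>" "\<delta> < 1" "0 < a" "(2 - \<delta>) * \<gamma> = 1 - \<delta> * (1 - a)"
    and count: "l \<le> \<pi>\<^sub>1 + g + b"
    and windows: "\<delta> * (l - w) \<le> g"
    and budget: "g * ((1 - a) * L) + b * \<Lambda> + (b - \<pi>\<^sub>2) * H \<le> l * (L + 2 - \<Lambda>)"
    and "\<gamma> * L \<le> \<Lambda>" "\<Lambda> + H \<le> (1 - a) * L"
    and "\<pi>\<^sub>1 * (\<Lambda> + H) \<le> 12 * l" "\<pi>\<^sub>2 * H \<le> l" "w * L \<le> l"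
    and "0 < l" "0 \<le> H" "0 \<le> \<Lambda>" "0 \<le> L" "0 \<le> w"
  shows "(1 - \<delta>) * H \<le> 16"
proof -
  define c where "c = (1 - a) * L - \<Lambda> - H"
  have "0 \<le> c" "c \<le> L"
    using assms by (simp_all add: c_def algebra_simps)
  have "(l - \<pi>\<^sub>1 - g) * (\<Lambda> + H) \<le> b * (\<Lambda> + H)"
    using count assms by (intro mult_right_mono) auto
  moreover have "g * ((1 - a) * L) + b * \<Lambda> + (b - \<pi>\<^sub>2) * H = g * ((1 - a) * L) + b * (\<Lambda> + H) - \<pi>\<^sub>2 * H"
    by (simp add: algebra_simps)
  moreover have "g * ((1 - a) * L) + (l - \<pi>\<^sub>1 - g) * (\<Lambda> + H) = g * c + l * (\<Lambda> + H) - \<pi>\<^sub>1 * (\<Lambda> + H)"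
    by (simp add: c_def algebra_simps)
  moreover have "\<delta> * (l - w) * c \<le> g * c"
    using windows \<open>0 \<le> c\<close> by (rule mult_right_mono)
  moreover have "\<delta> * (l - w) * c = \<delta> * l * c - \<delta> * w * c"
    by (simp add: algebra_simps)
  moreover have "\<delta> * w \<le> w"
    using assms by (simp add: mult_left_le_one_le)
  then have "\<delta> * w * c \<le> w * L"
    using assms \<open>0 \<le> c\<close> \<open>c \<le> L\<close> by (intro mult_mono) auto
  moreover have "\<delta> * l * c + l * (\<Lambda> + H) - l * (L + 2 - \<Lambda>)
      = l * ((2 - \<delta>) * \<Lambda> - (1 - \<delta> * (1 - a)) * L) + l * ((1 - \<delta>) * H) - 2 * l"
    by (simp add: c_def algebra_simps)
  moreover have "(1 - \<delta> * (1 - a)) * L \<le> (2 - \<delta>) * \<Lambda>"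
    using assms mult_left_mono[of "\<gamma> * L" \<Lambda> "2 - \<delta>"] by (simp add: mult.assoc[symmetric])
  then have "0 \<le> l * ((2 - \<delta>) * \<Lambda> - (1 - \<delta> * (1 - a)) * L)"
    using \<open>0 < l\<close> by simp
  ultimately have "l * ((1 - \<delta>) * H) \<le> l * 16"
    using budget assms(10-12) by linarith
  then show ?thesis
    using \<open>0 < l\<close> by simp
qed

locale dense_windows =
  fixes a \<delta> :: real and M :: nat
  assumes a_pos: "0 < a" and a_less_half: "a < 1/2" and \<delta>_pos: "0 < \<delta>" and M_ge_one: "1 \<le> M"
    and dense: "\<And>m. M \<le> m \<Longrightarrow> \<delta> * real m powr a \<le> real (card (window_primes a m))"
begin

text \<open>For \<open>\<delta> \<ge> 1\<close> the at most \<open>\<lfloor>m\<^sup>a\<rfloor>\<close> window primes would number at least \<open>m\<^sup>a\<close>, forcing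
  \<open>m\<^sup>a \<in> \<int>\<close> for all large \<open>m\<close>.\<close>
lemma \<delta>_less_one: "\<delta> < 1"
proof (rule ccontr)
  assume "\<not> \<delta> < 1"
  have "real m powr a \<in> \<int>" if "M \<le> m" for m
  proof -
    have "real m powr a \<le> \<delta> * real m powr a"
      using \<open>\<not> \<delta> < 1\<close> by (simp add: mult_le_cancel_right1)
    also have "\<dots> \<le> real (card (window_primes a m))"
      using dense[OF that] .
    also have "\<dots> \<le> real (nat \<lfloor>real m powr a\<rfloor>)"
      using that M_ge_one by (intro of_nat_mono card_window_primes_le[OF a_pos a_less_half]) simp
    also have "\<dots> = of_int \<lfloor>real m powr a\<rfloor>"
      by simp
    finally have "real m powr a = of_int \<lfloor>real m powr a\<rfloor>"
      by (simp add: antisym)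
    then show ?thesis
      by (metis Ints_of_int)
  qed
  then show False
    using exists_powr_notin_Ints[OF a_pos, of M] a_less_half by auto
qed

lemma card_window_chain_primes_ge:
  assumes "M \<le> n"
  shows "\<delta> * (real (window_chain a n T) - real n) \<le>
           (\<Sum>t<T. real (card (window_primes a (window_chain a n t))))"
proof -
  let ?s = "window_chain a n"
  have "\<delta> * (real (?s (Suc t)) - real (?s t)) \<le> real (card (window_primes a (?s t)))" for t
  proof -
    have "real (?s (Suc t)) - real (?s t) \<le> real (?s t) powr a"
      using of_nat_floor[of "real (?s t) powr a"] by simp
    then have "\<delta> * (real (?s (Suc t)) - real (?s t)) \<le> \<delta> * real (?s t) powr a"
      using \<delta>_pos by (intro mult_left_mono) auto
    also have "\<dots> \<le> real (card (window_primes a (?s t)))"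
      using dense window_chain_ge[of a n t] a_pos assms M_ge_one by simp
    finally show ?thesis .
  qed
  then have "(\<Sum>t<T. \<delta> * (real (?s (Suc t)) - real (?s t))) \<le> (\<Sum>t<T. real (card (window_primes a (?s t))))"
    by (rule sum_mono)
  moreover have "(\<Sum>t<T. \<delta> * (real (?s (Suc t)) - real (?s t))) = \<delta> * (real (?s T) - real n)"
    by (simp only: sum_distrib_left[symmetric] sum_lessThan_telescope[of "\<lambda>t. real (?s t)" T]
        window_chain.simps(1))
  ultimately show ?thesis
    by simp
qed

text \<open>Run the window chain from \<open>n\<close> until it leaves \<open>(n, n + l]\<close>; the windows passed on the way
  contribute pairwise different prime factors of \<open>(n+1)\<cdots>(n+l)\<close>, all above \<open>n\<^sup>1\<^sup>-\<^sup>a\<close>.\<close>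
lemma large_prime_factors:
  assumes "M \<le> n" "real l < real n powr (1 - a)"
  obtains G where "G \<subseteq> prime_factors (\<Prod>i=1..l. n + i)" "\<forall>p\<in>G. real n powr (1 - a) < real p"
    "\<delta> * (real l - real (n + l) powr a) \<le> real (card G)"
proof -
  let ?s = "window_chain a n"
  have "1 \<le> n"
    using assms M_ge_one by simp
  obtain T where T: "?s T \<le> n + l" "n + l < ?s (Suc T)"
    using exists_crossing[of ?s "n + l" "Suc l"] window_chain_ge[of a n "Suc l"] a_pos \<open>1 \<le> n\<close> by auto
  have stop: "?s (Suc t) \<le> n + l" if "t < T" for t
    using incseqD[OF incseq_window_chain Suc_leI[OF that]] T(1) by (rule order_trans)
  define G where "G = (\<Union>t<T. window_primes a (?s t))"
  have large: "real n powr (1 - a) < real p" if "p \<in> G" for p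
    using that window_chain_primes_large[OF a_pos a_less_half \<open>1 \<le> n\<close>] by (auto simp: G_def)
  have factors: "G \<subseteq> prime_factors (\<Prod>i=1..l. n + i)"
    using window_chain_primes_prime_factor[OF a_pos a_less_half \<open>1 \<le> n\<close> stop] by (auto simp: G_def)
  have "card G = (\<Sum>t<T. card (window_primes a (?s t)))"
    unfolding G_def using card_UN_window_chain_primes[OF a_pos a_less_half \<open>1 \<le> n\<close> T(1) assms(2)] .
  then have "\<delta> * (real (?s T) - real n) \<le> real (card G)"
    using card_window_chain_primes_ge[OF assms(1), of T] by simp
  moreover have "real (n + l) < real (?s T) + real (n + l) powr a"
  proof -
    have "real (n + l) < real (?s T) + real (nat \<lfloor>real (?s T) powr a\<rfloor>)"
      using T(2) by (simp only: window_chain.simps(2) of_nat_less_iff flip: of_nat_add)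
    also have "real (nat \<lfloor>real (?s T) powr a\<rfloor>) \<le> real (?s T) powr a"
      by (rule of_nat_floor) simp
    also have "\<dots> \<le> real (n + l) powr a"
      using T(1) a_pos by (intro powr_mono2) auto
    finally show ?thesis
      by simp
  qed
  then have "\<delta> * (real l - real (n + l) powr a) \<le> \<delta> * (real (?s T) - real n)"
    using \<delta>_pos by (intro mult_left_mono) auto
  ultimately show ?thesis
    using that[OF factors] large by (meson order_trans)
qed

lemma prime_factor_counts:
  fixes l K :: nat
  assumes "M \<le> n" "1 \<le> l" "1 \<le> K" "real l < real n powr (1 - a)"
    and "l \<le> omega (\<Prod>i=1..l. n + i)"
  obtains g b :: nat where
    "real l \<le> real (card {p. prime p \<and> p \<le> l}) + real g + real b"
    "\<delta> * (real l - real (n + l) powr a) \<le> real g"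
    "real g * ((1 - a) * ln n) + real b * ln l + (real b - real (card {p. prime p \<and> p \<le> K * l})) * ln K
       \<le> real l * (ln (real (n + l)) - ln l + 1)"
proof -
  let ?P = "\<Prod>i=1..l. n + i"
  have "1 \<le> n"
    using assms(1) M_ge_one by simp
  obtain G where G: "G \<subseteq> prime_factors ?P" "\<forall>p\<in>G. real n powr (1 - a) < real p"
      "\<delta> * (real l - real (n + l) powr a) \<le> real (card G)"
    using large_prime_factors[OF assms(1,4)] by blast
  define Q where "Q = {p. prime p \<and> l < p \<and> p dvd ?P}"
  have "Q \<subseteq> prime_factors ?P"
    by (auto simp: Q_def in_prime_factors_iff)
  then have "finite Q"
    by (rule finite_subset) simp
  have "G \<subseteq> Q"
    using G(1,2) assms(4) by (force simp: Q_def in_prime_factors_iff)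
  define B where "B = Q - G"
  have card_Q: "card Q = card G + card B"
    using \<open>finite Q\<close> \<open>G \<subseteq> Q\<close> by (simp add: B_def card_Diff_subset card_mono finite_subset)
  have sum_Q: "(\<Sum>p\<in>Q. ln (real p)) = (\<Sum>p\<in>B. ln (real p)) + (\<Sum>p\<in>G. ln (real p))"
    using \<open>finite Q\<close> \<open>G \<subseteq> Q\<close> unfolding B_def by (rule sum.subset_diff[rotated])
  have "prime_factors ?P \<subseteq> {p. prime p \<and> p \<le> l} \<union> Q"
    by (force simp: Q_def in_prime_factors_iff)
  then have "omega ?P \<le> card ({p. prime p \<and> p \<le> l} \<union> Q)"
    unfolding omega_def using \<open>finite Q\<close> by (intro card_mono) auto
  also have "\<dots> \<le> card {p. prime p \<and> p \<le> l} + card Q"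
    by (rule card_Un_le)
  finally have count: "l \<le> card {p. prime p \<and> p \<le> l} + card G + card B"
    using assms(5) card_Q by linarith
  have "(1 - a) * ln n \<le> ln (real p)" if "p \<in> G" for p
  proof -
    have "ln (real n powr (1 - a)) \<le> ln (real p)"
      using G(2) that \<open>1 \<le> n\<close> by (intro ln_mono) auto
    then show ?thesis
      using \<open>1 \<le> n\<close> by (simp add: ln_powr)
  qed
  then have sum_G: "real (card G) * ((1 - a) * ln n) \<le> (\<Sum>p\<in>G. ln (real p))"
    by (rule sum_bounded_below)
  have sum_B: "real (card B) * ln l + (real (card B) - real (card {p. prime p \<and> p \<le> K * l})) * ln K
      \<le> (\<Sum>p\<in>B. ln (real p))"
    using \<open>finite Q\<close> assms(2,3) by (intro sum_ln_primes_above_ge) (auto simp: B_def Q_def)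
  have "(\<Sum>p\<in>Q. ln (real p)) \<le> real l * (ln (real (n + l)) - ln l + 1)"
    using \<open>finite Q\<close> assms(2) \<open>1 \<le> n\<close> by (intro sum_ln_large_prime_factors_le) (auto simp: Q_def)
  then show thesis
    using that[of "card G" "card B"] count G(3) sum_Q sum_G sum_B by linarith
qed

lemma omega_prod_shifted_less:
  fixes l K :: nat and \<gamma> :: real
  assumes \<gamma>: "(2 - \<delta>) * \<gamma> = 1 - \<delta> * (1 - a)" and K: "1 \<le> K" "16 < (1 - \<delta>) * ln K"
    and "M \<le> n" "2 \<le> l" "l \<le> n" "real l < real n powr (1 - a)"
    and "\<gamma> * ln n \<le> ln l" "ln l + ln K \<le> (1 - a) * ln n" "6 * K * ln K \<le> ln l"
    and "real (n + l) powr a * ln n \<le> l"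
  shows "omega (\<Prod>i=1..l. n + i) < l"
proof (rule ccontr)
  assume "\<not> omega (\<Prod>i=1..l. n + i) < l"
  then have "l \<le> omega (\<Prod>i=1..l. n + i)"
    by simp
  moreover have "1 \<le> l"
    using assms(5) by simp
  ultimately obtain g b :: nat where
    count: "real l \<le> real (card {p. prime p \<and> p \<le> l}) + real g + real b" and
    windows: "\<delta> * (real l - real (n + l) powr a) \<le> real g" and
    budget: "real g * ((1 - a) * ln n) + real b * ln l + (real b - real (card {p. prime p \<and> p \<le> K * l})) * ln K
       \<le> real l * (ln (real (n + l)) - ln l + 1)"
    using prime_factor_counts[OF assms(4) _ K(1) assms(7)] by blast
  have "0 < ln l" "0 \<le> ln K" "1 \<le> n"
    using assms(5,6) K(1) by auto
  have "ln K \<le> 6 * K * ln K"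
    using mult_right_mono[of 1 "real (6 * K)" "ln K"] K(1) \<open>0 \<le> ln K\<close> by simp
  then have small_primes: "real (card {p. prime p \<and> p \<le> l}) * (ln l + ln K) \<le> 12 * real l"
    using assms(10) \<open>0 \<le> ln K\<close> by (intro card_primes_mult_ln_le[OF assms(5)]) auto
  have medium_primes: "real (card {p. prime p \<and> p \<le> K * l}) * ln K \<le> real l"
    by (rule card_primes_scaled_mult_ln_le[OF K(1) assms(5,10)])
  have "ln (real (n + l)) \<le> ln (2 * real n)"
    using assms(6) \<open>1 \<le> n\<close> by (intro ln_mono) auto
  also have "\<dots> < ln n + 1"
    using ln_2_less_1 \<open>1 \<le> n\<close> by (simp add: ln_mult)
  finally have "real l * (ln (real (n + l)) - ln l + 1) \<le> real l * (ln n + 2 - ln l)"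
    by (intro mult_left_mono) auto
  then have "real g * ((1 - a) * ln n) + real b * ln l + (real b - real (card {p. prime p \<and> p \<le> K * l})) * ln K
       \<le> real l * (ln n + 2 - ln l)"
    using budget by linarith
  then have "(1 - \<delta>) * ln K \<le> 16"
    using \<open>0 \<le> ln K\<close> \<open>0 < ln l\<close> \<open>1 \<le> n\<close> assms(5)
    by (intro log_budget_bound[OF \<delta>_pos \<delta>_less_one a_pos \<gamma> count windows _ assms(8,9) small_primes
      medium_primes assms(11)]) auto
  then show False
    using K(2) by simp
qed

lemma g1_less_powr:
  fixes K :: nat and \<gamma> :: real
  assumes \<gamma>: "(2 - \<delta>) * \<gamma> = 1 - \<delta> * (1 - a)" "\<gamma> < 1" and K: "1 \<le> K" "16 < (1 - \<delta>) * ln K"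
    and "M \<le> n" "real n powr \<gamma> + 1 < real n powr (1 - a)" "ln 2 + ln K \<le> (1 - a - \<gamma>) * ln n"
    and "6 * K * ln K \<le> \<gamma> * ln n" "2 * real n powr a * ln n \<le> real n powr \<gamma>" "2 \<le> real n powr \<gamma>"
  shows "real (g1 n) < real n powr \<gamma>"
proof (rule ccontr)
  assume "\<not> real (g1 n) < real n powr \<gamma>"
  define x where "x = real n powr \<gamma>"
  define l where "l = nat \<lceil>x\<rceil>"
  have "1 \<le> n"
    using assms(5) M_ge_one by simp
  have "x \<le> real l" "real l \<le> x + 1" "2 \<le> x"
    using assms(10) of_int_ceiling_le_add_one[of x] by (auto simp: l_def x_def)
  have "2 \<le> l"
    using \<open>x \<le> real l\<close> \<open>2 \<le> x\<close> by simp
  have "x \<le> real (g1 n)"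
    using \<open>\<not> real (g1 n) < real n powr \<gamma>\<close> by (simp add: x_def)
  then have "l \<le> g1 n"
    by (simp add: l_def)
  have "x \<le> real n powr 1"
    unfolding x_def using \<open>1 \<le> n\<close> \<gamma>(2) by (intro powr_mono) auto
  then have "l \<le> n"
    using \<open>1 \<le> n\<close> by (simp add: l_def)
  have ln_x: "ln x = \<gamma> * ln n"
    using \<open>1 \<le> n\<close> by (simp add: x_def ln_powr)
  have "ln x \<le> ln l"
    using \<open>x \<le> real l\<close> \<open>2 \<le> x\<close> by (intro ln_mono) auto
  have "ln l \<le> ln (2 * x)"
    using \<open>real l \<le> x + 1\<close> \<open>2 \<le> l\<close> \<open>2 \<le> x\<close> by (intro ln_mono) auto
  then have "ln l \<le> ln 2 + \<gamma> * ln n"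
    using \<open>2 \<le> x\<close> ln_x by (simp add: ln_mult)
  have "real (n + l) powr a * ln n \<le> 2 * real n powr a * ln n"
    using add_powr_le_two_mult_powr[of a l n] a_pos a_less_half \<open>l \<le> n\<close> \<open>1 \<le> n\<close>
    by (intro mult_right_mono) auto
  then have "real (n + l) powr a * ln n \<le> l"
    using assms(9) \<open>x \<le> real l\<close> by (simp add: x_def)
  then have "omega (\<Prod>i=1..l. n + i) < l"
    using \<open>ln x \<le> ln l\<close> \<open>ln l \<le> ln 2 + \<gamma> * ln n\<close> ln_x assms(6-8) \<open>real l \<le> x + 1\<close>
    by (intro omega_prod_shifted_less[OF \<gamma>(1) K assms(5) \<open>2 \<le> l\<close> \<open>l \<le> n\<close>])
      (auto simp: x_def algebra_simps)
  then show False
    using g1_omega_ge[OF \<open>1 \<le> n\<close> _ \<open>l \<le> g1 n\<close>] \<open>2 \<le> l\<close> by simp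
qed

lemma eventually_g1_less_powr:
  fixes \<gamma> :: real
  assumes \<gamma>: "(2 - \<delta>) * \<gamma> = 1 - \<delta> * (1 - a)" "a < \<gamma>" "\<gamma> < 1/2"
  shows "\<forall>\<^sub>F n in sequentially. real (g1 n) < real n powr \<gamma>"
proof -
  obtain K :: nat where K: "exp (17 / (1 - \<delta>)) \<le> real K"
    using real_arch_simple by blast
  have "0 < 1 - \<delta>"
    using \<delta>_less_one by simp
  then have "1 \<le> exp (17 / (1 - \<delta>))"
    by simp
  then have "1 \<le> real K"
    using K by linarith
  then have "1 \<le> K"
    by simp
  have "17 / (1 - \<delta>) \<le> ln K"
    using K by (metis exp_gt_zero ln_exp ln_mono)
  then have "16 < (1 - \<delta>) * ln K"
    using \<open>0 < 1 - \<delta>\<close> by (simp add: field_simps)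
  have "0 < \<gamma>" "\<gamma> < 1 - a" "0 < 1 - a - \<gamma>"
    using \<gamma> a_pos by auto
  then have "\<forall>\<^sub>F n in sequentially. real n powr \<gamma> + 1 < real n powr (1 - a)"
    and "\<forall>\<^sub>F n in sequentially. ln 2 + ln K \<le> (1 - a - \<gamma>) * ln n"
    and "\<forall>\<^sub>F n in sequentially. 6 * K * ln K \<le> \<gamma> * ln n"
    and "\<forall>\<^sub>F n in sequentially. 2 * real n powr a * ln n \<le> real n powr \<gamma>"
    and "\<forall>\<^sub>F n in sequentially. 2 \<le> real n powr \<gamma>"
    using a_pos \<gamma>(2) by real_asymp+
  moreover have "\<forall>\<^sub>F n in sequentially. M \<le> n"
    by (rule eventually_ge_at_top)
  ultimately show ?thesis
    by eventually_elim (use \<gamma> \<open>1 \<le> K\<close> \<open>16 < (1 - \<delta>) * ln K\<close> in \<open>auto intro: g1_less_powr\<close>)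
qed

end

theorem theorem1p4:
  fixes \<alpha> \<delta> :: real
  assumes "0 < \<alpha>" and "\<alpha> < 1/2" and "\<delta> > 0"
    and "\<forall>\<^sub>F m in sequentially.
           (\<Sum>j = 1..nat \<lfloor>real m powr \<alpha>\<rfloor>.
              real (prime_pi ((real m + real m powr \<alpha>) / real j)) - real (prime_pi (real m / real j)))
           \<ge> \<delta> * real m powr \<alpha>"
  shows "max \<alpha> ((1 - \<delta> * (1 - \<alpha>)) / (2 - \<delta>)) < 1/2 \<and>
         (\<forall>\<^sub>F n in sequentially. real (g1 n) < real n powr (max \<alpha> ((1 - \<delta> * (1 - \<alpha>)) / (2 - \<delta>))))"
proof -
  obtain M where M: "\<And>m. M \<le> m \<Longrightarrow> \<delta> * real m powr \<alpha> \<le> (\<Sum>j = 1..nat \<lfloor>real m powr \<alpha>\<rfloor>.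
      real (prime_pi ((real m + real m powr \<alpha>) / real j)) - real (prime_pi (real m / real j)))"
    using assms(4) unfolding eventually_sequentially by blast
  interpret dense_windows \<alpha> \<delta> "max M 1"
    using assms(1-3) M card_window_primes_eq_sum[OF assms(1,2)] by unfold_locales auto
  define \<gamma> where "\<gamma> = (1 - \<delta> * (1 - \<alpha>)) / (2 - \<delta>)"
  have "\<alpha> < \<gamma>" "\<gamma> < 1/2"
    using exponent_bounds[OF assms(1-3) \<delta>_less_one] by (simp_all add: \<gamma>_def)
  moreover have "(2 - \<delta>) * \<gamma> = 1 - \<delta> * (1 - \<alpha>)"
    using \<delta>_less_one by (simp add: \<gamma>_def)
  ultimately show ?thesis
    using eventually_g1_less_powr unfolding \<gamma>_def[symmetric] by (simp add: max_absorb2)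
qed

end
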